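(* Let $\Sigma$ be a real symmetric positive definite $n\times n$ matrix and let $D_0$ be the diagonal matrix with $[D_0]_{ii}=\dfrac{1}{2[\Sigma^{-1}]_{ii}}$, $i=1,\dots,n$. Let \[\mathcal S(\Sigma)=\{(\hat\Sigma,\tilde\Sigma)\mid \Sigma=\hat\Sigma+\tilde\Sigma,\ \hat\Sigma\ge0,\ \tilde\Sigma\ge 0,\ \tilde\Sigma\text{ diagonal}\},\] and let $(\hat\Sigma_{\rm opt},\tilde\Sigma_{\rm opt})$ be the (unique) maximizer over $\mathcal S(\Sigma)$ of $\operatorname{trace}(\hat\Sigma-\hat\Sigma\Sigma^{-1}\hat\Sigma)$ (equivalently, of $\min_{K\in\mathbb R^{n\times n}}L(K,\hat\Sigma,\tilde\Sigma)$, where $L(K,\hat\Sigma,\tilde\Sigma)=\operatorname{trace}(\hat\Sigma-K\hat\Sigma-\hat\Sigma K'+K(\hat\Sigma+\tilde\Sigma)K')$). If $\Sigma-D_0\ge 0$, then $\tilde\Sigma_{\rm opt}=D_0$ and $\hat\Sigma_{\rm opt}=\Sigma-D_0$. Otherwise, $\tilde\Sigma_{\rm opt}\le D_0$ and $\hat\Sigma_{\rm opt}$ is singular.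
   Context: All matrices are real symmetric $n\times n$ unless stated; $M\ge0$ means positive semidefinite and $A\le B$ means $B-A\ge 0$. $L$ is the trace of the mean-square error of the estimate $K\mathbf x$ of $\hat{\mathbf x}$ when $\mathbf x=\hat{\mathbf x}+\tilde{\mathbf x}$ with uncorrelated zero-mean components of covariances $\hat\Sigma,\tilde\Sigma$. *)

theory Defs
  imports "HOL-Analysis.Analysis"
begin

definition psd :: "real^'n^'n \<Rightarrow> bool" where
  "psd A \<longleftrightarrow> transpose A = A \<and> (\<forall>x. 0 \<le> x \<bullet> (A *v x))"

definition pd :: "real^'n^'n \<Rightarrow> bool" where
  "pd A \<longleftrightarrow> transpose A = A \<and> (\<forall>x. x \<noteq> 0 \<longrightarrow> 0 < x \<bullet> (A *v x))"

definition loewner_le :: "real^'n^'n \<Rightarrow> real^'n^'n \<Rightarrow> bool" where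
  "loewner_le A B \<longleftrightarrow> psd (B - A)"

definition diagonal_mat :: "real^'n^'n \<Rightarrow> bool" where
  "diagonal_mat A \<longleftrightarrow> (\<forall>i j. i \<noteq> j \<longrightarrow> A $ i $ j = 0)"

definition split_set :: "real^'n^'n \<Rightarrow> ((real^'n^'n) \<times> (real^'n^'n)) set" where
  "split_set S = {(Sh, St). S = Sh + St \<and> psd Sh \<and> psd St \<and> diagonal_mat St}"

definition objective :: "real^'n^'n \<Rightarrow> real^'n^'n \<Rightarrow> real" where
  "objective S Sh = trace (Sh - Sh ** matrix_inv S ** Sh)"

definition D0 :: "real^'n^'n \<Rightarrow> real^'n^'n" where
  "D0 S = (\<chi> i j. if i = j then 1 / (2 * (matrix_inv S $ i $ i)) else 0)"

end

theory Submission
  imports Defs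
begin

text \<open>
  Writing \<open>St = diag d\<close> and \<open>P = \<Sigma>\<^sup>-\<^sup>1\<close>, the objective becomes the separable concave function
  \<open>\<Sum>i. d\<^sub>i - P\<^sub>i\<^sub>i d\<^sub>i\<^sup>2\<close>, whose unconstrained maximizer is \<open>D0\<close>; the only coupling constraint
  is \<open>\<Sigma> - diag d \<ge> 0\<close>. If \<open>D0\<close> is feasible it is the unique maximizer. Otherwise an entry
  \<open>d\<^sub>k > [D0]\<^sub>k\<^sub>k\<close> could be lowered to \<open>[D0]\<^sub>k\<^sub>k\<close> (this only adds a positive semidefinite
  diagonal to \<open>\<Sigma> - diag d\<close>), and if \<open>\<Sigma> - diag d\<close> were invertible it would dominate a
  positive multiple of \<open>e\<^sub>k e\<^sub>k\<^sup>T\<close>, so an entry \<open>d\<^sub>k < [D0]\<^sub>k\<^sub>k\<close> could be raised a little;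
  both moves strictly increase the objective.
\<close>

definition diag_matrix :: "('n \<Rightarrow> real) \<Rightarrow> real^'n^'n" where
  "diag_matrix d = (\<chi> i j. if i = j then d i else 0)"

lemma diag_matrix_nth [simp]: "diag_matrix d $ i $ j = (if i = j then d i else 0)"
  by (simp add: diag_matrix_def)

lemma diagonal_mat_eq_diag_matrix: "diagonal_mat D \<Longrightarrow> D = diag_matrix (\<lambda>i. D $ i $ i)"
  by (auto simp: diagonal_mat_def vec_eq_iff)

lemma diagonal_mat_diag_matrix [simp]: "diagonal_mat (diag_matrix d)"
  by (simp add: diagonal_mat_def)

lemma diag_matrix_diff: "diag_matrix a - diag_matrix b = diag_matrix (\<lambda>i. a i - b i)"
  by (simp add: vec_eq_iff)

lemma diff_diag_matrix_fun_upd: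
  "S - diag_matrix (d(k := v)) = (S - diag_matrix d) + diag_matrix ((\<lambda>_. 0)(k := d k - v))"
  by (simp add: vec_eq_iff)

lemma transpose_diag_matrix [simp]: "transpose (diag_matrix d) = diag_matrix d"
  by (simp add: transpose_def vec_eq_iff)

lemma diag_matrix_mult_vector: "diag_matrix d *v x = (\<chi> i. d i * x $ i)"
  by (simp add: vec_eq_iff matrix_vector_mult_def if_distrib if_distribR cong: if_cong)

lemma quadratic_form_diag_matrix: "x \<bullet> (diag_matrix d *v x) = (\<Sum>i\<in>UNIV. d i * (x $ i)\<^sup>2)"
  by (simp add: diag_matrix_mult_vector inner_vec_def power2_eq_square algebra_simps)

lemma psd_diag_matrix_iff: "psd (diag_matrix d) \<longleftrightarrow> (\<forall>i. 0 \<le> d i)"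
proof
  assume "psd (diag_matrix d)"
  then have "0 \<le> axis i 1 \<bullet> (diag_matrix d *v axis i 1)" for i
    unfolding psd_def by blast
  then show "\<forall>i. 0 \<le> d i"
    by (simp add: quadratic_form_diag_matrix axis_def if_distrib if_distribR cong: if_cong)
qed (auto simp: psd_def quadratic_form_diag_matrix intro!: sum_nonneg)

lemma transpose_add: "transpose (A + B) = transpose A + transpose (B :: real^'n^'m)"
  by (simp add: transpose_def vec_eq_iff)

lemma psd_add: "psd A \<Longrightarrow> psd B \<Longrightarrow> psd (A + B)"
  unfolding psd_def
  by (simp add: transpose_add matrix_vector_mult_add_rdistrib inner_add_right)

lemma matrix_mult_diff_left: "((A :: real^'n^'m) - B) ** C = A ** C - B ** C"
  by (simp add: matrix_matrix_mult_def vec_eq_iff sum_subtractf algebra_simps)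

lemma matrix_mult_diff_right: "(A :: real^'n^'m) ** (B - C) = A ** B - A ** C"
  by (simp add: matrix_matrix_mult_def vec_eq_iff sum_subtractf algebra_simps)

lemma symmetric_inner_matrix_vector:
  "transpose A = A \<Longrightarrow> x \<bullet> (A *v y) = y \<bullet> ((A :: real^'n^'n) *v x)"
  by (metis dot_lmul_matrix inner_commute transpose_matrix_vector)

lemma matrix_inv_right: "invertible A \<Longrightarrow> A ** matrix_inv A = mat 1"
  and matrix_inv_left: "invertible A \<Longrightarrow> matrix_inv A ** A = mat 1"
  unfolding invertible_def matrix_inv_def by (metis (mono_tags, lifting) someI_ex)+

lemma pd_invertible: "pd S \<Longrightarrow> invertible S"
proof -
  assume "pd S"
  then have "\<forall>x. S *v x = 0 \<longrightarrow> x = 0"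
    unfolding pd_def by (metis inner_zero_right less_irrefl)
  then show ?thesis
    using matrix_left_invertible_ker invertible_left_inverse by blast
qed

lemma pd_matrix_inv_diag_pos:
  assumes "pd S"
  shows "0 < matrix_inv S $ i $ i"
proof -
  define y where "y = matrix_inv S *v axis i 1"
  have Sy: "S *v y = axis i 1"
    using matrix_inv_right[OF pd_invertible[OF assms]] by (simp add: y_def matrix_vector_mul_assoc)
  then have "y \<noteq> 0"
    by (metis axis_nth matrix_vector_mult_0_right zero_index zero_neq_one)
  then have "0 < y \<bullet> (S *v y)"
    using assms unfolding pd_def by blast
  also have "y \<bullet> (S *v y) = y $ i"
    unfolding Sy by (simp add: inner_axis)
  also have "\<dots> = matrix_inv S $ i $ i"
    by (simp add: y_def matrix_vector_mult_def axis_def if_distrib if_distribR cong: if_cong)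
  finally show ?thesis .
qed

lemma nonneg_quadratic_discriminant:
  fixes a b c :: real
  assumes "0 \<le> a" and "\<And>t. 0 \<le> c + 2 * t * b + t\<^sup>2 * a"
  shows "b\<^sup>2 \<le> a * c"
proof (cases "a = 0")
  case True
  have "b = 0"
  proof (rule ccontr)
    assume "b \<noteq> 0"
    have "0 \<le> c + 2 * (- (c + 1) / (2 * b)) * b + (- (c + 1) / (2 * b))\<^sup>2 * a"
      by (rule assms(2))
    with True \<open>b \<noteq> 0\<close> show False by (simp add: field_simps)
  qed
  with True show ?thesis by simp
next
  case False
  with assms(1) have "0 < a" by simp
  have "0 \<le> c + 2 * (- b / a) * b + (- b / a)\<^sup>2 * a"
    by (rule assms(2))
  with \<open>0 < a\<close> show ?thesis by (simp add: field_simps power2_eq_square)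
qed

lemma psd_cauchy_schwarz:
  assumes "psd A"
  shows "(y \<bullet> (A *v x))\<^sup>2 \<le> (y \<bullet> (A *v y)) * (x \<bullet> (A *v (x :: real^'n)))"
proof (rule nonneg_quadratic_discriminant)
  show "0 \<le> y \<bullet> (A *v y)"
    using assms unfolding psd_def by blast
  fix t :: real
  have "x \<bullet> (A *v y) = y \<bullet> (A *v x)"
    using assms unfolding psd_def by (metis symmetric_inner_matrix_vector)
  then have "(x + t *\<^sub>R y) \<bullet> (A *v (x + t *\<^sub>R y))
      = x \<bullet> (A *v x) + 2 * t * (y \<bullet> (A *v x)) + t\<^sup>2 * (y \<bullet> (A *v y))"
    by (simp add: matrix_vector_right_distrib matrix_vector_mult_scaleR inner_add_left
        inner_add_right algebra_simps power2_eq_square)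
  moreover have "0 \<le> (x + t *\<^sub>R y) \<bullet> (A *v (x + t *\<^sub>R y))"
    using assms unfolding psd_def by blast
  ultimately show "0 \<le> x \<bullet> (A *v x) + 2 * t * (y \<bullet> (A *v x)) + t\<^sup>2 * (y \<bullet> (A *v y))"
    by simp
qed

text \<open>For \<open>y = A\<^sup>-\<^sup>1 e\<^sub>k\<close>, Cauchy-Schwarz gives \<open>x\<^sub>k\<^sup>2 = (y \<bullet> A x)\<^sup>2 \<le> y\<^sub>k (x \<bullet> A x)\<close>.\<close>
lemma invertible_psd_dominates_coordinate:
  assumes "psd A" and "invertible A"
  obtains c where "0 < c" and "psd (A - diag_matrix ((\<lambda>_. 0)(k := c)))"
proof -
  define y where "y = matrix_inv A *v axis k 1"
  have Ay: "A *v y = axis k 1"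
    using matrix_inv_right[OF assms(2)] by (simp add: y_def matrix_vector_mul_assoc)
  have symA: "transpose A = A"
    using assms(1) unfolding psd_def by blast
  have bound: "(x $ k)\<^sup>2 \<le> y $ k * (x \<bullet> (A *v x))" for x
  proof -
    have "y \<bullet> (A *v x) = x $ k"
      using symmetric_inner_matrix_vector[OF symA, of y x] Ay by (simp add: inner_axis)
    moreover have "y \<bullet> (A *v y) = y $ k"
      using Ay by (simp add: inner_axis)
    ultimately show ?thesis
      using psd_cauchy_schwarz[OF assms(1), of y x] by simp
  qed
  have "0 \<le> y $ k"
    using assms(1) Ay unfolding psd_def by (metis inner_axis inner_real_def mult.right_neutral)
  moreover have "y $ k \<noteq> 0"
    using bound[of "axis k 1"] by auto
  ultimately have pos: "0 < y $ k" by simp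
  have "psd (A - diag_matrix ((\<lambda>_. 0)(k := 1 / y $ k)))"
    unfolding psd_def
  proof (intro conjI allI)
    show "transpose (A - diag_matrix ((\<lambda>_. 0)(k := 1 / y $ k)))
        = A - diag_matrix ((\<lambda>_. 0)(k := 1 / y $ k))"
      using symA by (simp add: transpose_def vec_eq_iff)
    fix x
    have "(x $ k)\<^sup>2 / y $ k \<le> x \<bullet> (A *v x)"
      using bound[of x] pos by (simp add: field_simps)
    then show "0 \<le> x \<bullet> ((A - diag_matrix ((\<lambda>_. 0)(k := 1 / y $ k))) *v x)"
      by (simp add: matrix_vector_mult_diff_rdistrib inner_diff_right quadratic_form_diag_matrix
          if_distrib if_distribR cong: if_cong)
  qed
  with pos show thesis
    by (intro that[of "1 / y $ k"]) simp_all
qed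

lemma quadratic_le_vertex:
  fixes p x :: real
  assumes "0 < p"
  shows "x - p * x\<^sup>2 \<le> 1 / (2 * p) - p * (1 / (2 * p))\<^sup>2"
    and "x \<noteq> 1 / (2 * p) \<Longrightarrow> x - p * x\<^sup>2 < 1 / (2 * p) - p * (1 / (2 * p))\<^sup>2"
proof -
  have gap: "1 / (2 * p) - p * (1 / (2 * p))\<^sup>2 - (x - p * x\<^sup>2) = p * (x - 1 / (2 * p))\<^sup>2"
    using assms by (simp add: field_simps power2_eq_square)
  show "x - p * x\<^sup>2 \<le> 1 / (2 * p) - p * (1 / (2 * p))\<^sup>2"
    using gap assms by (smt (verit) mult_nonneg_nonneg zero_le_power2)
  show "x - p * x\<^sup>2 < 1 / (2 * p) - p * (1 / (2 * p))\<^sup>2" if "x \<noteq> 1 / (2 * p)"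
    using gap assms that by (smt (verit) mult_pos_pos zero_less_power2)
qed

lemma quadratic_strict_mono_below_vertex:
  fixes p x y :: real
  assumes "0 < p" and "x < y" and "y \<le> 1 / (2 * p)"
  shows "x - p * x\<^sup>2 < y - p * y\<^sup>2"
proof -
  have "p * (x + y) < p * (2 * (1 / (2 * p)))"
    using assms by (intro mult_strict_left_mono) auto
  then have "0 < (y - x) * (1 - p * (x + y))"
    using assms by simp
  also have "(y - x) * (1 - p * (x + y)) = (y - p * y\<^sup>2) - (x - p * x\<^sup>2)"
    by (simp add: algebra_simps power2_eq_square)
  finally show ?thesis by simp
qed

definition diag_objective :: "real^'n^'n \<Rightarrow> ('n \<Rightarrow> real) \<Rightarrow> real" where
  "diag_objective S d = (\<Sum>i\<in>UNIV. d i - matrix_inv S $ i $ i * (d i)\<^sup>2)"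

definition diag_feasible :: "real^'n^'n \<Rightarrow> ('n \<Rightarrow> real) \<Rightarrow> bool" where
  "diag_feasible S d \<longleftrightarrow> psd (S - diag_matrix d) \<and> (\<forall>i. 0 \<le> d i)"

definition diag_optimal :: "real^'n^'n \<Rightarrow> ('n \<Rightarrow> real) \<Rightarrow> bool" where
  "diag_optimal S d \<longleftrightarrow> diag_feasible S d \<and>
     (\<forall>d'. diag_feasible S d' \<longrightarrow> diag_objective S d' \<le> diag_objective S d)"

definition D0_diag :: "real^'n^'n \<Rightarrow> 'n \<Rightarrow> real" where
  "D0_diag S i = 1 / (2 * matrix_inv S $ i $ i)"

lemma D0_eq_diag_matrix: "D0 S = diag_matrix (D0_diag S)"
  by (simp add: D0_def D0_diag_def vec_eq_iff)

lemma objective_diag_complement: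
  assumes "invertible S"
  shows "objective S (S - diag_matrix d) = diag_objective S d"
proof -
  let ?P = "matrix_inv S" and ?D = "diag_matrix d"
  have "(S - ?D) ** ?P ** (S - ?D) = (mat 1 - ?D ** ?P) ** (S - ?D)"
    using matrix_inv_right[OF assms] by (simp add: matrix_mult_diff_left)
  also have "\<dots> = S - ?D - ?D + ?D ** ?P ** ?D"
    using matrix_inv_left[OF assms]
    by (simp add: matrix_mult_diff_left matrix_mult_diff_right matrix_mul_assoc[symmetric])
  finally have "objective S (S - ?D) = trace ?D - trace (?D ** ?P ** ?D)"
    unfolding objective_def by (simp add: trace_sub trace_add)
  also have "\<dots> = diag_objective S d"
    by (simp add: diag_objective_def trace_def matrix_matrix_mult_def sum_subtractf
        power2_eq_square algebra_simps if_distrib if_distribR cong: if_cong)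
  finally show ?thesis .
qed

lemma diag_feasible_iff_split_set:
  "(S - diag_matrix d, diag_matrix d) \<in> split_set S \<longleftrightarrow> diag_feasible S d"
  by (simp add: split_set_def diag_feasible_def psd_diag_matrix_iff)

lemma diag_optimal_if_split_set_maximizer:
  assumes "pd S" and "(S - diag_matrix d, diag_matrix d) \<in> split_set S"
    and "\<forall>(Sh, St) \<in> split_set S. objective S Sh \<le> objective S (S - diag_matrix d)"
  shows "diag_optimal S d"
  using assms objective_diag_complement[OF pd_invertible[OF assms(1)]]
  unfolding diag_optimal_def diag_feasible_iff_split_set[symmetric] by fastforce

lemma diag_objective_fun_upd_less:
  assumes "d k - matrix_inv S $ k $ k * (d k)\<^sup>2 < v - matrix_inv S $ k $ k * v\<^sup>2"
  shows "diag_objective S d < diag_objective S (d(k := v))"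
  unfolding diag_objective_def by (rule sum_strict_mono_ex1) (use assms in auto)

lemma diag_optimal_eq_D0_diag:
  assumes "pd S" and "diag_optimal S d" and "diag_feasible S (D0_diag S)"
  shows "d = D0_diag S"
proof (rule ccontr)
  assume "d \<noteq> D0_diag S"
  then obtain k where "d k \<noteq> D0_diag S k" by auto
  have "diag_objective S d < diag_objective S (D0_diag S)"
    unfolding diag_objective_def D0_diag_def
  proof (rule sum_strict_mono_ex1)
    show "\<forall>i\<in>UNIV. d i - matrix_inv S $ i $ i * (d i)\<^sup>2
        \<le> 1 / (2 * matrix_inv S $ i $ i) - matrix_inv S $ i $ i * (1 / (2 * matrix_inv S $ i $ i))\<^sup>2"
      using quadratic_le_vertex(1)[OF pd_matrix_inv_diag_pos[OF assms(1)]] by blast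
    show "\<exists>i\<in>UNIV. d i - matrix_inv S $ i $ i * (d i)\<^sup>2
        < 1 / (2 * matrix_inv S $ i $ i) - matrix_inv S $ i $ i * (1 / (2 * matrix_inv S $ i $ i))\<^sup>2"
      using quadratic_le_vertex(2)[OF pd_matrix_inv_diag_pos[OF assms(1)]] \<open>d k \<noteq> D0_diag S k\<close>
      unfolding D0_diag_def by blast
  qed simp
  with assms(2,3) show False
    unfolding diag_optimal_def by fastforce
qed

lemma diag_optimal_le_D0_diag:
  assumes "pd S" and "diag_optimal S d"
  shows "d k \<le> D0_diag S k"
proof (rule ccontr)
  assume "\<not> d k \<le> D0_diag S k"
  have pos: "0 < matrix_inv S $ k $ k"
    using pd_matrix_inv_diag_pos[OF assms(1)] .
  then have "0 < D0_diag S k"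
    by (simp add: D0_diag_def)
  moreover have "psd (S - diag_matrix d + diag_matrix ((\<lambda>_. 0)(k := d k - D0_diag S k)))"
    using assms(2) \<open>\<not> d k \<le> D0_diag S k\<close>
    by (intro psd_add) (auto simp: diag_optimal_def diag_feasible_def psd_diag_matrix_iff)
  ultimately have "diag_feasible S (d(k := D0_diag S k))"
    using assms(2) by (simp add: diag_optimal_def diag_feasible_def diff_diag_matrix_fun_upd)
  moreover have "diag_objective S d < diag_objective S (d(k := D0_diag S k))"
    using quadratic_le_vertex(2)[OF pos] \<open>\<not> d k \<le> D0_diag S k\<close>
    by (intro diag_objective_fun_upd_less) (auto simp: D0_diag_def)
  ultimately show False
    using assms(2) unfolding diag_optimal_def by fastforce
qed

lemma diag_optimal_singular:
  assumes "pd S" and "diag_optimal S d" and "d k < D0_diag S k"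
  shows "\<not> invertible (S - diag_matrix d)"
proof
  assume "invertible (S - diag_matrix d)"
  moreover have "psd (S - diag_matrix d)" and d_nonneg: "\<forall>i. 0 \<le> d i"
    using assms(2) by (simp_all add: diag_optimal_def diag_feasible_def)
  ultimately obtain c where "0 < c" and c: "psd (S - diag_matrix d - diag_matrix ((\<lambda>_. 0)(k := c)))"
    using invertible_psd_dominates_coordinate by blast
  define e where "e = min c (D0_diag S k - d k)"
  have "0 < e" and "e \<le> c" and "e \<le> D0_diag S k - d k"
    using \<open>0 < c\<close> assms(3) by (simp_all add: e_def)
  have "psd ((S - diag_matrix d - diag_matrix ((\<lambda>_. 0)(k := c))) + diag_matrix ((\<lambda>_. 0)(k := c - e)))"
    using c \<open>e \<le> c\<close> by (intro psd_add) (simp_all add: psd_diag_matrix_iff)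
  also have "(S - diag_matrix d - diag_matrix ((\<lambda>_. 0)(k := c))) + diag_matrix ((\<lambda>_. 0)(k := c - e))
      = S - diag_matrix (d(k := d k + e))"
    by (simp add: vec_eq_iff)
  finally have "psd (S - diag_matrix (d(k := d k + e)))" .
  with d_nonneg \<open>0 < e\<close> have "diag_feasible S (d(k := d k + e))"
    by (simp add: diag_feasible_def)
  moreover have "diag_objective S d < diag_objective S (d(k := d k + e))"
    using \<open>0 < e\<close> \<open>e \<le> D0_diag S k - d k\<close> pd_matrix_inv_diag_pos[OF assms(1)]
    by (intro diag_objective_fun_upd_less quadratic_strict_mono_below_vertex)
      (auto simp: D0_diag_def)
  ultimately show False
    using assms(2) unfolding diag_optimal_def by fastforce
qed

theorem proposition11:
  fixes S Sh_opt St_opt :: "real^'n^'n"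
  assumes "pd S"
    and "(Sh_opt, St_opt) \<in> split_set S"
    and "\<forall>(Sh, St) \<in> split_set S. objective S Sh \<le> objective S Sh_opt"
  shows "(psd (S - D0 S) \<longrightarrow> St_opt = D0 S \<and> Sh_opt = S - D0 S) \<and>
         (\<not> psd (S - D0 S) \<longrightarrow> loewner_le St_opt (D0 S) \<and> \<not> invertible Sh_opt)"
proof -
  define d where "d i = St_opt $ i $ i" for i
  have St: "St_opt = diag_matrix d" and Sh: "Sh_opt = S - diag_matrix d"
    using assms(2) diagonal_mat_eq_diag_matrix unfolding split_set_def d_def by auto
  have opt: "diag_optimal S d"
    using diag_optimal_if_split_set_maximizer assms unfolding St Sh by blast
  have "St_opt = D0 S \<and> Sh_opt = S - D0 S" if "psd (S - D0 S)"
  proof -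
    have "diag_feasible S (D0_diag S)"
      using that pd_matrix_inv_diag_pos[OF assms(1)]
      by (simp add: diag_feasible_def D0_eq_diag_matrix D0_diag_def less_imp_le)
    then show ?thesis
      using diag_optimal_eq_D0_diag[OF assms(1) opt] St Sh by (simp add: D0_eq_diag_matrix)
  qed
  moreover have "loewner_le St_opt (D0 S)"
    using diag_optimal_le_D0_diag[OF assms(1) opt]
    by (simp add: loewner_le_def St D0_eq_diag_matrix diag_matrix_diff psd_diag_matrix_iff)
  moreover have "\<not> invertible Sh_opt" if "\<not> psd (S - D0 S)"
  proof -
    have "d \<noteq> D0_diag S"
      using that assms(2) Sh by (auto simp: split_set_def D0_eq_diag_matrix)
    then obtain k where "d k < D0_diag S k"
      using diag_optimal_le_D0_diag[OF assms(1) opt] by (meson ext order_less_le)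
    then show ?thesis
      using diag_optimal_singular[OF assms(1) opt] Sh by blast
  qed
  ultimately show ?thesis by blast
qed

end
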